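(* Assume $X'X/n\to C$ as $n\to\infty$ with $C$ positive definite. If $\lambda^*\to0$ as $n\to\infty$, then $\sqrt{n}(\hat\beta_{AL}-\hat\beta_{LS})\to0$ as $n\to\infty$ (for every realization).
   Context: Linear regression model $y=X\beta+\varepsilon$ with $y\in\mathbb{R}^n$, a non-stochastic regressor matrix $X\in\mathbb{R}^{n\times p}$ ($p$ fixed) of full column rank, unknown $\beta\in\mathbb{R}^p$, and error vector $\varepsilon$ with i.i.d. components of mean zero and finite variance $\sigma^2>0$. $\hat\beta_{LS}=(X'X)^{-1}X'y$; the events $\{\hat\beta_{LS,j}=0\}$ are assumed to have probability zero and are excluded. Non-negative tuning parameters $\lambda_j=\lambda_{n,j}$, $j=1,\dots,p$, and $\lambda^*=\max_{1\le j\le p}\lambda_j$. The adaptive Lasso estimator is $\hat\beta_{AL}=\arg\min_{b\in\mathbb{R}^p}\big(\|y-Xb\|^2+2\sum_{j=1}^p\lambda_j|b_j|/|\hat\beta_{LS,j}|\big)$. *)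

theory Defs
  imports "HOL-Analysis.Analysis"
begin

text \<open>Design matrix for sample size n, given by its rows: row i (for i < n) is
  X n i :: real^'p.  Response y n i for i < n.\<close>

definition gram :: "(nat \<Rightarrow> nat \<Rightarrow> real^'p) \<Rightarrow> nat \<Rightarrow> real^'p^'p" where
  "gram X n = (\<Sum>i<n. (\<chi> a b. X n i $ a * X n i $ b))"

definition Xty :: "(nat \<Rightarrow> nat \<Rightarrow> real^'p) \<Rightarrow> (nat \<Rightarrow> nat \<Rightarrow> real) \<Rightarrow> nat \<Rightarrow> real^'p" where
  "Xty X y n = (\<Sum>i<n. y n i *\<^sub>R X n i)"

definition beta_LS :: "(nat \<Rightarrow> nat \<Rightarrow> real^'p) \<Rightarrow> (nat \<Rightarrow> nat \<Rightarrow> real) \<Rightarrow> nat \<Rightarrow> real^'p" where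
  "beta_LS X y n = matrix_inv (gram X n) *v Xty X y n"

definition AL_obj :: "(nat \<Rightarrow> nat \<Rightarrow> real^'p) \<Rightarrow> (nat \<Rightarrow> nat \<Rightarrow> real) \<Rightarrow> (nat \<Rightarrow> 'p \<Rightarrow> real)
    \<Rightarrow> nat \<Rightarrow> real^'p \<Rightarrow> real" where
  "AL_obj X y lam n b = (\<Sum>i<n. (y n i - X n i \<bullet> b)\<^sup>2)
      + 2 * (\<Sum>j\<in>UNIV. lam n j * \<bar>b $ j\<bar> / \<bar>beta_LS X y n $ j\<bar>)"

definition pos_def :: "real^'p^'p \<Rightarrow> bool" where
  "pos_def C \<longleftrightarrow> transpose C = C \<and> (\<forall>x. x \<noteq> 0 \<longrightarrow> x \<bullet> (C *v x) > 0)"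

end

theory Submission
  imports Defs
begin

text \<open>Write \<open>d = \<beta>\<^sub>AL - \<beta>\<^sub>LS\<close> and \<open>G = X'X\<close>. By the normal equations the residual sum of squares
  at \<open>\<beta>\<^sub>AL\<close> exceeds that at \<open>\<beta>\<^sub>LS\<close> by exactly \<open>d'Gd\<close>, while the penalty at \<open>\<beta>\<^sub>LS\<close> is
  \<open>2 \<Sum>\<^sub>j \<lambda>\<^sub>j\<close>. Comparing the objective at both points gives \<open>d'Gd \<le> 2 \<Sum>\<^sub>j \<lambda>\<^sub>j \<le> 2p\<lambda>*\<close>.
  Since \<open>G/n \<rightarrow> C\<close> with \<open>C\<close> positive definite, eventually \<open>d'Gd \<ge> c n |d|\<^sup>2\<close> for some
  \<open>c > 0\<close>, so \<open>n |d|\<^sup>2 \<le> 2p\<lambda>*/c \<rightarrow> 0\<close>.\<close>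

lemma gram_mult_vec: "gram X n *v v = (\<Sum>i<n. (X n i \<bullet> v) *\<^sub>R X n i)"
  by (simp add: gram_def vec_eq_iff matrix_vector_mult_def sum_component inner_vec_def
      sum_distrib_left sum_distrib_right mult.commute mult.left_commute sum.swap[of _ "{..<n}"])

lemma inner_gram_mult_vec: "v \<bullet> (gram X n *v v) = (\<Sum>i<n. (X n i \<bullet> v)\<^sup>2)"
  by (simp add: gram_mult_vec inner_sum_right power2_eq_square inner_commute)

lemma gram_mult_beta_LS:
  assumes "invertible (gram X n)"
  shows "gram X n *v beta_LS X y n = Xty X y n"
proof -
  have "gram X n ** matrix_inv (gram X n) = mat 1"
    using assms unfolding invertible_def matrix_inv_def by (rule someI2_ex) auto
  then show ?thesis
    by (simp add: beta_LS_def matrix_vector_mul_assoc)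
qed

lemma sum_sq_residuals_expand:
  "(\<Sum>i<n. (y n i - X n i \<bullet> b)\<^sup>2) = (\<Sum>i<n. (y n i - X n i \<bullet> a)\<^sup>2)
     - 2 * ((Xty X y n - gram X n *v a) \<bullet> (b - a)) + (b - a) \<bullet> (gram X n *v (b - a))"
proof -
  have pointwise: "(y n i - X n i \<bullet> b)\<^sup>2 = (y n i - X n i \<bullet> a)\<^sup>2
      - 2 * ((y n i - X n i \<bullet> a) * (X n i \<bullet> (b - a))) + (X n i \<bullet> (b - a))\<^sup>2" for i
    by (simp add: inner_diff_right power2_eq_square algebra_simps)
  have "Xty X y n - gram X n *v a = (\<Sum>i<n. (y n i - X n i \<bullet> a) *\<^sub>R X n i)"
    by (simp add: Xty_def gram_mult_vec sum_subtractf scaleR_left_diff_distrib inner_commute)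
  then have "(\<Sum>i<n. (y n i - X n i \<bullet> a) * (X n i \<bullet> (b - a)))
      = (Xty X y n - gram X n *v a) \<bullet> (b - a)"
    by (simp add: inner_sum_left)
  then show ?thesis
    by (simp add: pointwise sum.distrib sum_subtractf inner_gram_mult_vec flip: sum_distrib_left)
qed

lemma sum_sq_residuals_eq_at_beta_LS:
  assumes "invertible (gram X n)"
  shows "(\<Sum>i<n. (y n i - X n i \<bullet> b)\<^sup>2) = (\<Sum>i<n. (y n i - X n i \<bullet> beta_LS X y n)\<^sup>2)
     + (b - beta_LS X y n) \<bullet> (gram X n *v (b - beta_LS X y n))"
  using sum_sq_residuals_expand[of y n X b "beta_LS X y n"] gram_mult_beta_LS[OF assms]
  by simp

lemma AL_minimiser_gram_quadratic_le:
  assumes "invertible (gram X n)"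
    and "\<And>j. beta_LS X y n $ j \<noteq> 0"
    and "\<And>j. lam n j \<ge> 0"
    and "\<And>b. AL_obj X y lam n b\<^sub>A\<^sub>L \<le> AL_obj X y lam n b"
  shows "(b\<^sub>A\<^sub>L - beta_LS X y n) \<bullet> (gram X n *v (b\<^sub>A\<^sub>L - beta_LS X y n)) \<le> 2 * (\<Sum>j\<in>UNIV. lam n j)"
proof -
  let ?b\<^sub>L\<^sub>S = "beta_LS X y n"
  have "AL_obj X y lam n b\<^sub>A\<^sub>L \<le> AL_obj X y lam n ?b\<^sub>L\<^sub>S"
    by (rule assms(4))
  moreover have "(\<Sum>j\<in>UNIV. lam n j * \<bar>b\<^sub>A\<^sub>L $ j\<bar> / \<bar>?b\<^sub>L\<^sub>S $ j\<bar>) \<ge> 0"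
    by (intro sum_nonneg divide_nonneg_nonneg mult_nonneg_nonneg assms(3)) auto
  moreover have "(\<Sum>j\<in>UNIV. lam n j * \<bar>?b\<^sub>L\<^sub>S $ j\<bar> / \<bar>?b\<^sub>L\<^sub>S $ j\<bar>) = (\<Sum>j\<in>UNIV. lam n j)"
    using assms(2) by simp
  ultimately show ?thesis
    unfolding AL_obj_def sum_sq_residuals_eq_at_beta_LS[OF assms(1), of y b\<^sub>A\<^sub>L] by linarith
qed

lemma pos_def_coercive:
  fixes C :: "real^'p^'p"
  assumes "pos_def C"
  obtains c where "c > 0" "\<And>x. c * (norm x)\<^sup>2 \<le> x \<bullet> (C *v x)"
proof -
  let ?q = "\<lambda>x::real^'p. x \<bullet> (C *v x)"
  have "continuous_on (sphere 0 1) ?q"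
    by (intro continuous_intros linear_continuous_on
        linear_conv_bounded_linear[THEN iffD1] matrix_vector_mul_linear)
  moreover have "sphere (0::real^'p) 1 \<noteq> {}"
    by simp
  ultimately obtain x\<^sub>0 where x\<^sub>0: "x\<^sub>0 \<in> sphere 0 1" "\<And>x. x \<in> sphere 0 1 \<Longrightarrow> ?q x\<^sub>0 \<le> ?q x"
    using continuous_attains_inf[OF compact_sphere] by blast
  then have "?q x\<^sub>0 > 0"
    using assms unfolding pos_def_def by (metis norm_zero zero_neq_one mem_sphere_0)
  moreover have "?q x\<^sub>0 * (norm x)\<^sup>2 \<le> ?q x" for x
  proof (cases "x = 0")
    case False
    define u where "u = (1 / norm x) *\<^sub>R x"
    have "?q x\<^sub>0 \<le> ?q u"
      using False by (intro x\<^sub>0(2)) (simp add: u_def)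
    also have "?q u = ?q x / (norm x)\<^sup>2"
      by (simp add: u_def matrix_vector_mult_scaleR power2_eq_square)
    finally show ?thesis
      using False by (simp add: field_simps)
  qed simp
  ultimately show ?thesis
    using that by blast
qed

lemma abs_inner_matrix_vector_le:
  fixes M :: "real^'p^'p"
  shows "\<bar>x \<bullet> (M *v x)\<bar> \<le> real CARD('p) * real CARD('p) * norm M * (norm x)\<^sup>2"
proof -
  have "onorm ((*v) M) \<le> real CARD('p) * real CARD('p) * norm M"
    by (rule onorm_le_matrix_component)
      (rule order_trans[OF component_le_norm_cart Finite_Cartesian_Product.norm_nth_le])
  moreover have "norm (M *v x) \<le> onorm ((*v) M) * norm x"
    by (rule onorm) (simp add: linear_conv_bounded_linear[symmetric])
  ultimately have "norm (M *v x) \<le> real CARD('p) * real CARD('p) * norm M * norm x"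
    by (meson mult_right_mono norm_ge_zero order_trans)
  moreover have "\<bar>x \<bullet> (M *v x)\<bar> \<le> norm x * norm (M *v x)"
    by (rule Cauchy_Schwarz_ineq2)
  ultimately show ?thesis
    by (smt (verit) mult_left_mono norm_ge_zero power2_eq_square mult.assoc mult.commute)
qed

lemma eventually_coercive_if_tendsto_pos_def:
  fixes A :: "nat \<Rightarrow> real^'p^'p"
  assumes "A \<longlonglongrightarrow> C" and "pos_def C"
  obtains c where "c > 0" "\<forall>\<^sub>F n in sequentially. \<forall>x. c * (norm x)\<^sup>2 \<le> x \<bullet> (A n *v x)"
proof -
  obtain c where c: "c > 0" "\<And>x. c * (norm x)\<^sup>2 \<le> x \<bullet> (C *v x)"
    using pos_def_coercive[OF assms(2)] by blast
  define K where "K = real CARD('p) * real CARD('p)"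
  have "K > 0"
    by (simp add: K_def)
  have "\<forall>\<^sub>F n in sequentially. norm (A n - C) < c / (2 * K)"
    using assms(1) c(1) \<open>K > 0\<close> unfolding tendsto_iff dist_norm by simp
  then have coercive: "\<forall>\<^sub>F n in sequentially. \<forall>x. c / 2 * (norm x)\<^sup>2 \<le> x \<bullet> (A n *v x)"
  proof eventually_elim
    case (elim n)
    show ?case
    proof
      fix x :: "real^'p"
      have "K * norm (A n - C) * (norm x)\<^sup>2 \<le> c / 2 * (norm x)\<^sup>2"
        using elim \<open>K > 0\<close> by (intro mult_right_mono) (simp_all add: field_simps)
      moreover have "\<bar>x \<bullet> ((A n - C) *v x)\<bar> \<le> K * norm (A n - C) * (norm x)\<^sup>2"
        unfolding K_def by (rule abs_inner_matrix_vector_le)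
      moreover have "x \<bullet> (A n *v x) = x \<bullet> (C *v x) + x \<bullet> ((A n - C) *v x)"
        by (simp add: matrix_vector_mult_diff_rdistrib inner_diff_right)
      ultimately show "c / 2 * (norm x)\<^sup>2 \<le> x \<bullet> (A n *v x)"
        using c(2)[of x] by linarith
    qed
  qed
  moreover have "c / 2 > 0"
    using c(1) by simp
  ultimately show ?thesis
    using that by blast
qed

lemma tendsto_zero_if_norm_sq_eventually_le:
  fixes u :: "nat \<Rightarrow> 'a::real_normed_vector"
  assumes "\<forall>\<^sub>F n in sequentially. (norm (u n))\<^sup>2 \<le> f n" and "f \<longlonglongrightarrow> 0"
  shows "u \<longlonglongrightarrow> 0"
proof -
  have "(\<lambda>n. sqrt (f n)) \<longlonglongrightarrow> 0"
    using tendsto_real_sqrt[OF assms(2)] by simp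
  moreover have "\<forall>\<^sub>F n in sequentially. norm (u n) \<le> sqrt (f n)"
    using assms(1) by eventually_elim (rule real_le_rsqrt)
  ultimately have "(\<lambda>n. norm (u n)) \<longlonglongrightarrow> 0"
    using tendsto_sandwich[of "\<lambda>_. 0" "\<lambda>n. norm (u n)" sequentially "\<lambda>n. sqrt (f n)"] by simp
  then show ?thesis
    by (rule tendsto_norm_zero_cancel)
qed

theorem corollary1:
  fixes X :: "nat \<Rightarrow> nat \<Rightarrow> real^'p"
    and beta :: "real^'p"
    and eps :: "nat \<Rightarrow> nat \<Rightarrow> real"
    and y :: "nat \<Rightarrow> nat \<Rightarrow> real"
    and lam :: "nat \<Rightarrow> 'p \<Rightarrow> real"
    and C :: "real^'p^'p"
    and beta_AL :: "nat \<Rightarrow> real^'p"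
  assumes model: "\<And>n i. i < n \<Longrightarrow> y n i = X n i \<bullet> beta + eps n i"
    and regular: "\<forall>\<^sub>F n in sequentially. invertible (gram X n) \<and> (\<forall>j. beta_LS X y n $ j \<noteq> 0)"
    and lam_nonneg: "\<And>n j. lam n j \<ge> 0"
    and AL_min: "\<forall>\<^sub>F n in sequentially. \<forall>b. AL_obj X y lam n (beta_AL n) \<le> AL_obj X y lam n b"
    and gram_lim: "(\<lambda>n. (1 / real n) *\<^sub>R gram X n) \<longlonglongrightarrow> C"
    and C_pd: "pos_def C"
    and lam_lim: "(\<lambda>n. Max (range (lam n))) \<longlonglongrightarrow> 0"
  shows "(\<lambda>n. sqrt (real n) *\<^sub>R (beta_AL n - beta_LS X y n)) \<longlonglongrightarrow> 0"
proof -
  obtain c where "c > 0" and coercive: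
    "\<forall>\<^sub>F n in sequentially. \<forall>x. c * (norm x)\<^sup>2 \<le> x \<bullet> (((1 / real n) *\<^sub>R gram X n) *v x)"
    using eventually_coercive_if_tendsto_pos_def[OF gram_lim C_pd] by blast
  define lam_max where "lam_max n = Max (range (lam n))" for n
  have "\<forall>\<^sub>F n in sequentially.
      (norm (sqrt (real n) *\<^sub>R (beta_AL n - beta_LS X y n)))\<^sup>2 \<le> 2 * real CARD('p) / c * lam_max n"
    using regular AL_min coercive eventually_gt_at_top[of 0]
  proof eventually_elim
    case (elim n)
    define d where "d = beta_AL n - beta_LS X y n"
    have "c * (norm d)\<^sup>2 \<le> d \<bullet> (gram X n *v d) / real n"
      using spec[OF elim(3), of d] by (simp add: scaleR_matrix_vector_assoc[symmetric])
    also have "\<dots> \<le> 2 * (\<Sum>j\<in>UNIV. lam n j) / real n"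
      using elim(1,2) lam_nonneg unfolding d_def
      by (intro divide_right_mono AL_minimiser_gram_quadratic_le) auto
    also have "\<dots> \<le> 2 * (\<Sum>j\<in>(UNIV::'p set). lam_max n) / real n"
      unfolding lam_max_def by (intro divide_right_mono mult_left_mono sum_mono Max_ge) auto
    finally have "real n * (norm d)\<^sup>2 \<le> 2 * real CARD('p) / c * lam_max n"
      using \<open>c > 0\<close> elim(4) by (simp add: field_simps)
    then show ?case
      by (simp add: d_def power_mult_distrib)
  qed
  moreover have "(\<lambda>n. 2 * real CARD('p) / c * lam_max n) \<longlonglongrightarrow> 0"
    unfolding lam_max_def by (rule tendsto_mult_right_zero[OF lam_lim])
  ultimately show ?thesis
    by (rule tendsto_zero_if_norm_sq_eventually_le)
qed

end
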